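(* For every $t\in(0,1)$, $$\lim_{n \to \infty} \sum_{k \ge 0} B^{n-k}_k(t) = \frac{1}{1+t}.$$
   Context: The Bernstein polynomials are $B^m_k(t) = \binom{m}{k} t^k (1-t)^{m-k}$ for integers $0\le k\le m$, and $B^m_k(t)=0$ for $m<k$ (so only terms with $0\le k\le n/2$ contribute). *)

theory Defs
  imports Complex_Main
begin

definition bernstein :: "nat \<Rightarrow> nat \<Rightarrow> real \<Rightarrow> real" where
  "bernstein m k t = (if k \<le> m then real (m choose k) * t ^ k * (1 - t) ^ (m - k) else 0)"

end

theory Submission
  imports Defs
begin

text \<open>Pascal's rule for the Bernstein basis gives the diagonal sums
  \<open>S n = (\<Sum>k\<le>n. B\<^bsup>n-k\<^esup>\<^sub>k(t))\<close> the linear recurrence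
  \<open>S (n+2) = (1-t) S (n+1) + t S n\<close> with \<open>S 0 = 1\<close>, \<open>S 1 = 1 - t\<close>,
  whose characteristic roots are \<open>1\<close> and \<open>-t\<close>. Hence
  \<open>(1+t) S n = 1 - (-t)\<^sup>n\<^sup>+\<^sup>1\<close>, which tends to \<open>1\<close> for \<open>|t| < 1\<close>.\<close>

lemma bernstein_Suc_Suc:
  "bernstein (Suc m) (Suc k) t = (1 - t) * bernstein m (Suc k) t + t * bernstein m k t"
proof -
  consider (less) "k < m" | "k = m" | "m < k" by linarith
  then show ?thesis
  proof cases
    case less
    have "real (Suc m choose Suc k) = real (m choose Suc k) + real (m choose k)"
      by simp
    moreover have "Suc m - Suc k = Suc (m - Suc k)" "m - k = Suc (m - Suc k)"
      using less by simp_all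
    ultimately show ?thesis
      using less by (simp add: bernstein_def algebra_simps)
  qed (simp_all add: bernstein_def)
qed

definition diagonal_bernstein_sum :: "real \<Rightarrow> nat \<Rightarrow> real" where
  "diagonal_bernstein_sum t n = (\<Sum>k\<le>n. bernstein (n - k) k t)"

lemma diagonal_bernstein_sum_Suc_Suc:
  "diagonal_bernstein_sum t (Suc (Suc n))
     = (1 - t) * diagonal_bernstein_sum t (Suc n) + t * diagonal_bernstein_sum t n"
proof -
  let ?B = "\<lambda>m k. bernstein m k t"
  have shift: "diagonal_bernstein_sum t (Suc m) = ?B (Suc m) 0 + (\<Sum>k\<le>m. ?B (m - k) (Suc k))" for m
    unfolding diagonal_bernstein_sum_def by (subst sum.atMost_Suc_shift) simp
  have "(\<Sum>k\<le>Suc n. ?B (Suc n - k) (Suc k))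
      = (\<Sum>k\<le>Suc n. (1 - t) * ?B (n - k) (Suc k) + t * ?B (n - k) k)"
  proof (rule sum.cong)
    fix k assume "k \<in> {..Suc n}"
    then consider "k \<le> n" | "k = Suc n" by (auto simp: le_Suc_eq)
    then show "?B (Suc n - k) (Suc k) = (1 - t) * ?B (n - k) (Suc k) + t * ?B (n - k) k"
    proof cases
      case 1
      then show ?thesis by (simp only: Suc_diff_le bernstein_Suc_Suc)
    qed (simp add: bernstein_def)
  qed simp
  also have "\<dots> = (1 - t) * (\<Sum>k\<le>n. ?B (n - k) (Suc k)) + t * diagonal_bernstein_sum t n"
    by (simp add: sum.distrib sum_distrib_left diagonal_bernstein_sum_def bernstein_def)
  moreover have "?B (Suc (Suc n)) 0 = (1 - t) * ?B (Suc n) 0"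
    by (simp add: bernstein_def)
  ultimately show ?thesis
    using shift[of "Suc n"] shift[of n] by (simp add: algebra_simps)
qed

lemma diagonal_bernstein_sum_closed_form:
  "(1 + t) * diagonal_bernstein_sum t n = 1 - (- t) ^ Suc n"
proof (induction n rule: induct_nat_012)
  case (ge2 n)
  have "(1 + t) * diagonal_bernstein_sum t (Suc (Suc n))
      = (1 - t) * ((1 + t) * diagonal_bernstein_sum t (Suc n))
        + t * ((1 + t) * diagonal_bernstein_sum t n)"
    by (simp add: diagonal_bernstein_sum_Suc_Suc algebra_simps)
  also have "\<dots> = 1 - (- t) ^ Suc (Suc (Suc n))"
    by (simp only: ge2) (simp add: algebra_simps)
  finally show ?case .
qed (simp_all add: diagonal_bernstein_sum_def bernstein_def algebra_simps)

lemma diagonal_bernstein_sum_tendsto: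
  assumes "\<bar>t\<bar> < 1"
  shows "diagonal_bernstein_sum t \<longlonglongrightarrow> 1 / (1 + t)"
proof -
  have nonzero: "1 + t \<noteq> 0" using assms by linarith
  then have closed: "diagonal_bernstein_sum t = (\<lambda>n. (1 - (- t) ^ Suc n) / (1 + t))"
    by (simp add: fun_eq_iff eq_divide_eq diagonal_bernstein_sum_closed_form mult.commute)
  have "(\<lambda>n. (- t) ^ Suc n) \<longlonglongrightarrow> 0"
    using assms by (intro LIMSEQ_Suc LIMSEQ_power_zero) simp
  then have "(\<lambda>n. (1 - (- t) ^ Suc n) / (1 + t)) \<longlonglongrightarrow> (1 - 0) / (1 + t)"
    using nonzero by (intro tendsto_intros)
  then show ?thesis
    unfolding closed by simp
qed

theorem mainTheorem8:
  fixes t :: real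
  assumes "0 < t" and "t < 1"
  shows "(\<lambda>n. \<Sum>k\<le>n. bernstein (n - k) k t) \<longlonglongrightarrow> 1 / (1 + t)"
  using diagonal_bernstein_sum_tendsto[of t] assms
  by (simp add: diagonal_bernstein_sum_def [abs_def])

end
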